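(* For every contractor network, the matrix $\mathbf I-\mathbf A\mathbf W$ is invertible and the Neumann series $\sum_{t=0}^\infty(\mathbf A\mathbf W)^t$ converges to $(\mathbf I-\mathbf A\mathbf W)^{-1}$.
   Context: A contractor network is a finite directed graph $G=(\mathcal V,\mathcal E)$ with $n=|\mathcal V|$ nodes, without multiple edges (self-loops and directed cycles are allowed), in which every node has at least one incident edge. For $i\in\mathcal V$ let $\delta_{\mathrm{in}}(i)=\{j:(j,i)\in\mathcal E\}$ and $\delta_{\mathrm{out}}(i)=\{k:(i,k)\in\mathcal E\}$. A node $i$ is a pure principal if $\delta_{\mathrm{in}}(i)=\emptyset$, a pure obligee if $\delta_{\mathrm{out}}(i)=\emptyset$, and an intermediary otherwise. Each edge $(j,i)\in\mathcal E$ carries a weight $w_{ij}>0$; set $w_{ij}=0$ if $(j,i)\notin\mathcal E$; for every node $i$ with $\delta_{\mathrm{in}}(i)\neq\emptyset$ we have $\sum_{j\in\delta_{\mathrm{in}}(i)}w_{ij}=1$. Let $\mathbf W=(w_{ij})_{i,j\in\mathcal V}$. Each node has a propagation parameter $\alpha_i$, with $\alpha_i=0$ for pure principals, $\alpha_i=1$ for pure obligees, and $\alpha_i\in(0,1)$ for intermediaries; $\mathbf A=\mathrm{diag}(\alpha_i)_{i\in\mathcal V}$. *)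

theory Defs
  imports "HOL-Analysis.Analysis"
begin

text \<open>Nodes of the network are the elements of a finite type 'n; the edge set is
  E :: ('n \<times> 'n) set (a set of ordered pairs, hence no multiple edges; self loops allowed).
  The weight matrix W is indexed so that W $ i $ j = w_ij, the weight of edge (j,i).\<close>

definition in_nbrs :: "('n \<times> 'n) set \<Rightarrow> 'n \<Rightarrow> 'n set" where
  "in_nbrs E i = {j. (j, i) \<in> E}"

definition out_nbrs :: "('n \<times> 'n) set \<Rightarrow> 'n \<Rightarrow> 'n set" where
  "out_nbrs E i = {k. (i, k) \<in> E}"

definition contractor_network ::
  "('n::finite \<times> 'n) set \<Rightarrow> real^'n^'n \<Rightarrow> ('n \<Rightarrow> real) \<Rightarrow> bool" where
  "contractor_network E W \<alpha> \<longleftrightarrow>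
     (\<forall>i. in_nbrs E i \<noteq> {} \<or> out_nbrs E i \<noteq> {}) \<and>
     (\<forall>i j. (j, i) \<in> E \<longrightarrow> W $ i $ j > 0) \<and>
     (\<forall>i j. (j, i) \<notin> E \<longrightarrow> W $ i $ j = 0) \<and>
     (\<forall>i. in_nbrs E i \<noteq> {} \<longrightarrow> (\<Sum>j\<in>in_nbrs E i. W $ i $ j) = 1) \<and>
     (\<forall>i. in_nbrs E i = {} \<longrightarrow> \<alpha> i = 0) \<and>
     (\<forall>i. out_nbrs E i = {} \<longrightarrow> \<alpha> i = 1) \<and>
     (\<forall>i. in_nbrs E i \<noteq> {} \<and> out_nbrs E i \<noteq> {} \<longrightarrow> 0 < \<alpha> i \<and> \<alpha> i < 1)"

definition diag_mat :: "('n::finite \<Rightarrow> real) \<Rightarrow> real^'n^'n" where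
  "diag_mat a = (\<chi> i j. if i = j then a i else 0)"

text \<open>Matrix power w.r.t. matrix multiplication (the type's own * is entrywise).\<close>
definition mat_pow :: "real^'n^'n \<Rightarrow> nat \<Rightarrow> real^'n^'n" where
  "mat_pow M t = ((\<lambda>X. M ** X) ^^ t) (mat 1)"

end

theory Submission
  imports Defs
begin

text \<open>Write \<open>M = A W\<close>. It is entrywise nonnegative, and row \<open>i\<close> of \<open>M\<close> sums to \<open>0\<close> if \<open>i\<close>
  is a pure principal and to \<open>\<alpha>\<^sub>i\<close> otherwise; so every row sum is at most \<open>1\<close>, and it is
  strictly below \<open>1\<close> at every node with an outgoing edge. An entry \<open>M\<^sub>i\<^sub>k\<close> is nonzero only
  if \<open>(k, i)\<close> is an edge, i.e. only if \<open>k\<close> has an outgoing edge, so every row sum of \<open>M\<^sup>2\<close>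
  is bounded by some \<open>c < 1\<close>. Hence the row sums of \<open>M\<^sup>t\<close> are at most \<open>c\<^bsup>\<lfloor>t/2\<rfloor>\<^esup>\<close>, the
  Neumann series converges absolutely, and its sum \<open>S\<close> satisfies \<open>(I - M) S = I\<close> by
  telescoping.\<close>

lemma mat_pow_0 [simp]: "mat_pow M 0 = mat 1"
  by (simp add: mat_pow_def)

lemma mat_pow_Suc [simp]: "mat_pow M (Suc t) = M ** mat_pow M t"
  by (simp add: mat_pow_def)

lemma bounded_linear_matrix_mult_left:
  "bounded_linear (\<lambda>X::real^'n::finite^'m. A ** X)"
proof -
  have "linear (\<lambda>X::real^'n^'m. A ** X)"
    by (rule linearI) (simp_all add: matrix_add_ldistrib matrix_scalar_ac scalar_matrix_assoc)
  then show ?thesis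
    by (simp add: linear_conv_bounded_linear)
qed

lemma matrix_diff_rdistrib: "((A::'a::ring_1^'n^'m) - B) ** X = A ** X - B ** X"
  by (simp add: matrix_matrix_mult_def vec_eq_iff left_diff_distrib sum_subtractf)

lemma matrix_inv_eqI:
  fixes A :: "'a::semiring_1^'n^'m"
  assumes "A ** B = mat 1" "B ** A = mat 1"
  shows "matrix_inv A = B"
  unfolding matrix_inv_def
proof (rule some_equality)
  fix B' assume B': "A ** B' = mat 1 \<and> B' ** A = mat 1"
  have "B' = (B ** A) ** B'"
    using assms by simp
  also have "\<dots> = B"
    using B' by (simp flip: matrix_mul_assoc)
  finally show "B' = B" .
qed (use assms in blast)

lemma neumann_series_matrix:
  fixes M :: "real^'n::finite^'n"
  assumes "summable (\<lambda>t. norm (mat_pow M t))"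
  shows "invertible (mat 1 - M) \<and> mat_pow M sums matrix_inv (mat 1 - M)"
proof -
  obtain S where S: "mat_pow M sums S"
    using summable_norm_cancel[OF assms] by (auto simp: summable_def)
  have "(\<lambda>t. (mat 1 - M) ** mat_pow M t) sums ((mat 1 - M) ** S)"
    using bounded_linear.sums[OF bounded_linear_matrix_mult_left S] .
  moreover have "(\<lambda>t. (mat 1 - M) ** mat_pow M t) sums (mat 1 - 0)"
  proof -
    have "mat_pow M \<longlonglongrightarrow> 0"
      using summable_LIMSEQ_zero[OF assms] by (simp add: tendsto_norm_zero_iff)
    then have "(\<lambda>t. mat_pow M t - mat_pow M (Suc t)) sums (mat_pow M 0 - 0)"
      by (rule telescope_sums')
    then show ?thesis
      by (simp add: matrix_diff_rdistrib)
  qed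
  ultimately have right: "(mat 1 - M) ** S = mat 1"
    using sums_unique2 by fastforce
  then have left: "S ** (mat 1 - M) = mat 1"
    by (rule matrix_left_right_inverse1)
  have "invertible (mat 1 - M)"
    unfolding invertible_def using right left by blast
  with S show ?thesis
    by (simp add: matrix_inv_eqI[OF right left])
qed

lemma summable_power_div_2:
  fixes c :: real
  assumes "0 \<le> c" "c < 1"
  shows "summable (\<lambda>t. c ^ (t div 2))"
proof (rule summable_comparison_test)
  define d where "d = sqrt c"
  have d: "0 \<le> d" "d < 1"
    using assms by (auto simp: d_def)
  have "summable (\<lambda>t. d ^ (Suc t - 1))"
    using d by (simp add: summable_geometric)
  then show "summable (\<lambda>t. d ^ (t - 1))"
    by (rule summable_Suc_iff[THEN iffD1])
  have "c ^ (t div 2) \<le> d ^ (t - 1)" for t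
  proof -
    have "c ^ (t div 2) = d ^ (2 * (t div 2))"
      using assms by (simp add: d_def power_mult)
    also have "\<dots> \<le> d ^ (t - 1)"
      using d by (intro power_decreasing) auto
    finally show ?thesis .
  qed
  then show "\<exists>N. \<forall>t\<ge>N. norm (c ^ (t div 2)) \<le> d ^ (t - 1)"
    using assms by auto
qed

definition row_sum :: "real^'n::finite^'m \<Rightarrow> 'm \<Rightarrow> real" where
  "row_sum X i = (\<Sum>j\<in>UNIV. X $ i $ j)"

definition nonneg_mat :: "real^'n^'m \<Rightarrow> bool" where
  "nonneg_mat X \<longleftrightarrow> (\<forall>i j. 0 \<le> X $ i $ j)"

lemma row_sum_mat_1 [simp]: "row_sum (mat 1 :: real^'n::finite^'n) i = 1"
  by (simp add: row_sum_def mat_def if_distrib cong: if_cong)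

lemma row_sum_matrix_mult: "row_sum (X ** Y) i = (\<Sum>k\<in>UNIV. X $ i $ k * row_sum Y k)"
  unfolding row_sum_def matrix_matrix_mult_def
  by (simp add: sum_distrib_left) (rule sum.swap)

lemma row_sum_matrix_mult_le:
  assumes "nonneg_mat X" "\<And>k. X $ i $ k \<noteq> 0 \<Longrightarrow> row_sum Y k \<le> b"
  shows "row_sum (X ** Y) i \<le> row_sum X i * b"
proof -
  have "X $ i $ k * row_sum Y k \<le> X $ i $ k * b" for k
    using assms unfolding nonneg_mat_def
    by (cases "X $ i $ k = 0") (auto intro: mult_left_mono)
  then show ?thesis
    unfolding row_sum_matrix_mult by (simp add: row_sum_def sum_distrib_right sum_mono)
qed

lemma row_sum_nonneg: "nonneg_mat X \<Longrightarrow> 0 \<le> row_sum X i"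
  unfolding row_sum_def nonneg_mat_def by (simp add: sum_nonneg)

lemma nonneg_mat_mult: "nonneg_mat X \<Longrightarrow> nonneg_mat Y \<Longrightarrow> nonneg_mat (X ** Y)"
  unfolding nonneg_mat_def matrix_matrix_mult_def by (auto intro!: sum_nonneg)

lemma nonneg_mat_1: "nonneg_mat (mat 1)"
  by (simp add: nonneg_mat_def mat_def)

lemma nonneg_mat_pow: "nonneg_mat M \<Longrightarrow> nonneg_mat (mat_pow M t)"
  by (induction t) (simp_all add: nonneg_mat_1 nonneg_mat_mult)

lemma norm_le_row_sum_bound:
  fixes X :: "real^'n::finite^'m::finite" and b :: real
  assumes "nonneg_mat X" "\<And>i. row_sum X i \<le> b"
  shows "norm X \<le> CARD('m) * b"
proof -
  have "norm X \<le> (\<Sum>i\<in>UNIV. norm (X $ i))"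
    unfolding norm_vec_def by (rule L2_set_le_sum) simp
  also have "\<dots> \<le> (\<Sum>i\<in>UNIV. row_sum X i)"
    using assms(1) unfolding row_sum_def nonneg_mat_def
    by (intro sum_mono order_trans[OF norm_le_l1_cart]) simp
  also have "\<dots> \<le> (\<Sum>i\<in>(UNIV::'m set). b)"
    using assms(2) by (rule sum_mono)
  finally show ?thesis
    by simp
qed

lemma row_sum_mat_pow_le:
  fixes M :: "real^'n::finite^'n"
  assumes "nonneg_mat M" "\<And>i. row_sum M i \<le> 1" "\<And>i. row_sum (M ** M) i \<le> c" "0 \<le> c"
  shows "row_sum (mat_pow M t) i \<le> c ^ (t div 2)"
proof (induction t arbitrary: i rule: nat_induct2)
  case (step t)
  have "mat_pow M (t + 2) = (M ** M) ** mat_pow M t"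
    by (simp add: matrix_mul_assoc)
  then have "row_sum (mat_pow M (t + 2)) i \<le> row_sum (M ** M) i * c ^ (t div 2)"
    using assms(1) step.IH by (simp add: nonneg_mat_mult row_sum_matrix_mult_le)
  also have "\<dots> \<le> c * c ^ (t div 2)"
    using assms(3,4) by (simp add: mult_right_mono)
  finally show ?case
    by simp
qed (use assms(2) in simp_all)

lemma summable_norm_mat_pow:
  fixes M :: "real^'n::finite^'n"
  assumes "nonneg_mat M" "\<And>i. row_sum M i \<le> 1" "\<And>i. row_sum (M ** M) i \<le> c" "c < 1"
  shows "summable (\<lambda>t. norm (mat_pow M t))"
proof (rule summable_comparison_test)
  have c: "0 \<le> c"
    using row_sum_nonneg[OF nonneg_mat_mult[OF assms(1) assms(1)]] assms(3) order_trans by blast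
  then show "summable (\<lambda>t. CARD('n) * c ^ (t div 2))"
    using assms(4) by (intro summable_mult summable_power_div_2)
  show "\<exists>N. \<forall>t\<ge>N. norm (norm (mat_pow M t)) \<le> CARD('n) * c ^ (t div 2)"
    using assms(1) by (auto intro!: norm_le_row_sum_bound nonneg_mat_pow
        row_sum_mat_pow_le[OF assms(1-3) c])
qed

lemma diag_mat_mult_nth: "(diag_mat a ** W) $ i $ j = a i * W $ i $ j"
proof -
  have "(if i = k then a i else 0) * W $ k $ j = (if k = i then a i * W $ i $ j else 0)" for k
    by auto
  then show ?thesis
    by (simp add: diag_mat_def matrix_matrix_mult_def)
qed

context
  fixes E :: "('n::finite \<times> 'n) set" and W :: "real^'n^'n" and \<alpha> :: "'n \<Rightarrow> real"
  assumes network: "contractor_network E W \<alpha>"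
begin

lemma contractor_network_weight_nonneg: "0 \<le> W $ i $ j"
  using network unfolding contractor_network_def
  by (cases "(j, i) \<in> E") (auto intro: less_imp_le)

lemma contractor_network_propagation_bounds: "0 \<le> \<alpha> i \<and> \<alpha> i \<le> 1"
  using network unfolding contractor_network_def
  by (cases "in_nbrs E i = {}"; cases "out_nbrs E i = {}") (auto intro: less_imp_le)

lemma contractor_network_nonneg: "nonneg_mat (diag_mat \<alpha> ** W)"
  using contractor_network_weight_nonneg contractor_network_propagation_bounds
  by (simp add: nonneg_mat_def diag_mat_mult_nth)

lemma contractor_network_row_sum:
  "row_sum (diag_mat \<alpha> ** W) i = (if in_nbrs E i = {} then 0 else \<alpha> i)"
proof -
  have "row_sum W i = (\<Sum>j\<in>in_nbrs E i. W $ i $ j)"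
    unfolding row_sum_def
    by (rule sum.mono_neutral_right) (use network in \<open>auto simp: contractor_network_def in_nbrs_def\<close>)
  then have "row_sum W i = (if in_nbrs E i = {} then 0 else 1)"
    using network by (simp add: contractor_network_def)
  then show ?thesis
    by (simp add: row_sum_def diag_mat_mult_nth flip: sum_distrib_left)
qed

lemma contractor_network_row_sum_le_1: "row_sum (diag_mat \<alpha> ** W) i \<le> 1"
  using contractor_network_propagation_bounds by (simp add: contractor_network_row_sum)

lemma contractor_network_row_sum_less_1:
  assumes "out_nbrs E i \<noteq> {}"
  shows "row_sum (diag_mat \<alpha> ** W) i < 1"
  using network assms by (simp add: contractor_network_row_sum contractor_network_def)

lemma contractor_network_nth_nonzero_imp_out_nbrs:
  assumes "(diag_mat \<alpha> ** W) $ i $ k \<noteq> 0"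
  shows "out_nbrs E k \<noteq> {}"
proof -
  have "(k, i) \<in> E"
    using network assms by (auto simp: contractor_network_def diag_mat_mult_nth)
  then show ?thesis
    by (auto simp: out_nbrs_def)
qed

text \<open>Two steps always pass through a node with an outgoing edge, where the row sum is
  strictly below \<open>1\<close>.\<close>

lemma contractor_network_row_sum_square_bounded:
  "\<exists>c<1. \<forall>i. row_sum ((diag_mat \<alpha> ** W) ** (diag_mat \<alpha> ** W)) i \<le> c"
proof -
  let ?M = "diag_mat \<alpha> ** W"
  define c where "c = Max (insert 0 (row_sum ?M ` {k. out_nbrs E k \<noteq> {}}))"
  have "c < 1"
    unfolding c_def using contractor_network_row_sum_less_1 by (subst Max_less_iff) auto
  moreover have "row_sum (?M ** ?M) i \<le> c" for i
  proof -
    have "row_sum ?M k \<le> c" if "?M $ i $ k \<noteq> 0" for k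
      unfolding c_def using contractor_network_nth_nonzero_imp_out_nbrs[OF that] by (intro Max_ge) auto
    then have "row_sum (?M ** ?M) i \<le> row_sum ?M i * c"
      by (intro row_sum_matrix_mult_le contractor_network_nonneg)
    also have "\<dots> \<le> c"
      using contractor_network_row_sum_le_1 row_sum_nonneg[OF contractor_network_nonneg]
      by (intro mult_left_le_one_le) (auto simp: c_def)
    finally show ?thesis .
  qed
  ultimately show ?thesis
    by blast
qed

end

theorem mainTheorem3:
  fixes E :: "('n::finite \<times> 'n) set" and W :: "real^'n^'n" and \<alpha> :: "'n \<Rightarrow> real"
  assumes "contractor_network E W \<alpha>"
  shows "invertible (mat 1 - diag_mat \<alpha> ** W)
         \<and> (\<lambda>t. mat_pow (diag_mat \<alpha> ** W) t) sums matrix_inv (mat 1 - diag_mat \<alpha> ** W)"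
proof -
  obtain c where "c < 1" "\<And>i. row_sum ((diag_mat \<alpha> ** W) ** (diag_mat \<alpha> ** W)) i \<le> c"
    using contractor_network_row_sum_square_bounded[OF assms] by blast
  then have "summable (\<lambda>t. norm (mat_pow (diag_mat \<alpha> ** W) t))"
    by (intro summable_norm_mat_pow contractor_network_nonneg[OF assms]
        contractor_network_row_sum_le_1[OF assms])
  then show ?thesis
    by (rule neumann_series_matrix)
qed

end
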